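(* Let $m\ge 2$ be even, $n\ge1$, and let $\mathcal{T}=(t_{i_1\cdots i_m})\in\mathbb{R}^{[m,n]}$ be a Nekrasov $Z$ tensor with all diagonal elements $t_{i\cdots i}>0$. Let $$W=\mathrm{diag}(w_1,\dots,w_n),\qquad w_i=\Big(\frac{\Lambda_i(\mathcal{T})}{t_{i i\cdots i}}\Big)^{\frac{1}{m-1}}.$$ Then the tensor $\mathcal{T}W=(b_{i_1\cdots i_m})$, with entries $b_{i_1 i_2\cdots i_m}=t_{i_1 i_2\cdots i_m}w_{i_2}\cdots w_{i_m}$, is a diagonally dominant $Z$ tensor, i.e. all its off-diagonal entries are nonpositive and $|b_{i\cdots i}|\ge\sum_{(i_2,\dots,i_m)\neq(i,\dots,i)}|b_{i i_2\cdots i_m}|$ for all $i\in[n]$.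
   Context: $[n]=\{1,\dots,n\}$ and $\mathbb{R}^{[m,n]}$ denotes the set of real tensors $\mathcal{T}=(t_{i_1\cdots i_m})$ with $i_1,\dots,i_m\in[n]$. A diagonal element is $t_{i\cdots i}$; all other entries are off-diagonal. $\mathcal{T}$ is a $Z$ tensor if all its off-diagonal entries are nonpositive. For $\mathcal{T}$ with $t_{i\cdots i}\neq 0$ for all $i$, define $R_i(\mathcal{T})=\sum_{(i_2,\dots,i_m)\neq(i,\dots,i)}|t_{i i_2\cdots i_m}|$, $\Lambda_1(\mathcal{T})=R_1(\mathcal{T})$, and for $i=2,\dots,n$ $$\Lambda_i(\mathcal{T})=\sum_{(i_2,\dots,i_m)\in[i-1]^{m-1}}|t_{i i_2\cdots i_m}|\Big(\tfrac{\Lambda_{i_2}(\mathcal{T})}{|t_{i_2\cdots i_2}|}\Big)^{\frac{1}{m-1}}\cdots\Big(\tfrac{\Lambda_{i_m}(\mathcal{T})}{|t_{i_m\cdots i_m}|}\Big)^{\frac{1}{m-1}}+\sum_{(i_2,\dots,i_m)\notin[i-1]^{m-1},\ (i_2,\dots,i_m)\neq(i,\dots,i)}|t_{i i_2\cdots i_m}|.$$ $\mathcal{T}$ is a Nekrasov tensor if $|t_{i\cdots i}|>\Lambda_i(\mathcal{T})$ for all $i\in[n]$; a Nekrasov $Z$ tensor is one that is both a Nekrasov tensor and a $Z$ tensor. A tensor $\mathcal{B}=(b_{i_1\cdots i_m})$ is diagonally dominant if $|b_{i\cdots i}|\ge\sum_{(i_2,\dots,i_m)\neq(i,\dots,i)}|b_{i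 i_2\cdots i_m}|$ for every $i$. The product $\mathcal{T}W$ of a tensor with a diagonal matrix is the general tensor product of Shao, which here gives the entry formula stated in the claim. *)

theory Defs
  imports Complex_Main
begin

text \<open>A tensor of order m and dimension n is a real function on index lists;
  only index lists of length m with entries in {1..n} are relevant.
  Entry t_{i1...im} is T [i1,...,im].\<close>

type_synonym tensor = "nat list \<Rightarrow> real"

definition tuples :: "nat \<Rightarrow> nat \<Rightarrow> nat list set" where
  "tuples k n = {xs. length xs = k \<and> set xs \<subseteq> {1..n}}"

definition diag_entry :: "nat \<Rightarrow> tensor \<Rightarrow> nat \<Rightarrow> real" where
  "diag_entry m T i = T (replicate m i)"

definition Z_tensor :: "nat \<Rightarrow> nat \<Rightarrow> tensor \<Rightarrow> bool" where
  "Z_tensor m n T \<longleftrightarrow>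
     (\<forall>idx \<in> tuples m n. (\<forall>k. idx \<noteq> replicate m k) \<longrightarrow> T idx \<le> 0)"

definition Rsum :: "nat \<Rightarrow> nat \<Rightarrow> tensor \<Rightarrow> nat \<Rightarrow> real" where
  "Rsum m n T i = (\<Sum>xs \<in> {xs \<in> tuples (m-1) n. xs \<noteq> replicate (m-1) i}. \<bar>T (i # xs)\<bar>)"

text \<open>Lam_upto m n T k gives the values Lambda_1, ..., Lambda_k (at arguments 1..k).\<close>
primrec Lam_upto :: "nat \<Rightarrow> nat \<Rightarrow> tensor \<Rightarrow> nat \<Rightarrow> (nat \<Rightarrow> real)" where
  "Lam_upto m n T 0 = (\<lambda>_. 0)"
| "Lam_upto m n T (Suc k) =
     (let L = Lam_upto m n T k; i = Suc k in
      L(i := (if i = 1 then Rsum m n T 1 else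
        (\<Sum>xs \<in> tuples (m-1) (i-1).
            \<bar>T (i # xs)\<bar> *
            (\<Prod>j\<leftarrow>xs. (L j / \<bar>diag_entry m T j\<bar>) powr (1 / (real m - 1))))
        + (\<Sum>xs \<in> {xs \<in> tuples (m-1) n. xs \<notin> tuples (m-1) (i-1)
                       \<and> xs \<noteq> replicate (m-1) i}. \<bar>T (i # xs)\<bar>))))"

definition Lambda :: "nat \<Rightarrow> nat \<Rightarrow> tensor \<Rightarrow> nat \<Rightarrow> real" where
  "Lambda m n T i = Lam_upto m n T i i"

definition nekrasov :: "nat \<Rightarrow> nat \<Rightarrow> tensor \<Rightarrow> bool" where
  "nekrasov m n T \<longleftrightarrow>
     (\<forall>i \<in> {1..n}. diag_entry m T i \<noteq> 0 \<and> \<bar>diag_entry m T i\<bar> > Lambda m n T i)"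

definition nekrasov_Z :: "nat \<Rightarrow> nat \<Rightarrow> tensor \<Rightarrow> bool" where
  "nekrasov_Z m n T \<longleftrightarrow> nekrasov m n T \<and> Z_tensor m n T"

definition diag_dominant :: "nat \<Rightarrow> nat \<Rightarrow> tensor \<Rightarrow> bool" where
  "diag_dominant m n B \<longleftrightarrow>
     (\<forall>i \<in> {1..n}. \<bar>diag_entry m B i\<bar> \<ge>
        (\<Sum>xs \<in> {xs \<in> tuples (m-1) n. xs \<noteq> replicate (m-1) i}. \<bar>B (i # xs)\<bar>))"

definition tensor_diag_mult :: "tensor \<Rightarrow> (nat \<Rightarrow> real) \<Rightarrow> tensor" where
  "tensor_diag_mult T w = (\<lambda>idx. T idx * (\<Prod>j\<leftarrow>tl idx. w j))"

end

theory Submission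
  imports Defs
begin

(* Since w i ^ (m - 1) = Lambda i / |t_{i...i}|, the diagonal entry of T W has absolute value
   Lambda i, and w i \<le> 1 because T is Nekrasov.  In row i, the off-diagonal entries whose
   indices all lie below i are scaled by exactly the factors in the recursive definition of
   Lambda i; every other one is scaled by a product of weights \<le> 1, hence bounded by its term
   in the second sum of Lambda i.  So the off-diagonal row sum of T W is at most Lambda i.
   Nonnegative weights preserve the signs of off-diagonal entries.  Neither the parity of m
   nor the sign of the diagonal plays a role. *)

lemma finite_tuples: "finite (tuples k n)"
  unfolding tuples_def using finite_lists_length_eq[of "{1..n}" k] by (simp add: conj_commute)

lemma tuples_0_empty: "k > 0 \<Longrightarrow> tuples k 0 = {}"
  unfolding tuples_def by (auto simp: length_greater_0_conv)

lemma prod_list_le_one: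
  fixes xs :: "'a::linordered_semidom list"
  assumes "\<And>x. x \<in> set xs \<Longrightarrow> 0 \<le> x \<and> x \<le> 1"
  shows "prod_list xs \<le> 1"
  using assms
proof (induction xs)
  case (Cons x xs)
  then have "0 \<le> prod_list xs"
    by (intro prod_list_nonneg) auto
  with Cons show ?case
    by (auto intro: mult_le_one)
qed simp

lemma powr_inverse_power:
  fixes x :: real
  assumes "0 \<le> x" and "k > 0"
  shows "(x powr (1 / real k)) ^ k = x"
proof (cases "x = 0")
  case False
  then show ?thesis
    using assms by (simp add: powr_power)
qed (use assms in simp)

lemma diag_dominant_iff_Rsum:
  "diag_dominant m n B \<longleftrightarrow> (\<forall>i \<in> {1..n}. Rsum m n B i \<le> \<bar>diag_entry m B i\<bar>)"
  unfolding diag_dominant_def Rsum_def ..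

lemma Lam_upto_eq_Lambda: "j \<le> k \<Longrightarrow> Lam_upto m n T k j = Lambda m n T j"
proof (induction k)
  case 0
  then show ?case by (simp add: Lambda_def)
next
  case (Suc k)
  then show ?case
    by (cases "j = Suc k") (auto simp: Lambda_def Let_def)
qed

lemma Lam_upto_nonneg: "Lam_upto m n T k j \<ge> 0"
proof (induction k arbitrary: j)
  case (Suc k)
  then show ?case
    by (auto simp: Let_def Rsum_def
        intro!: add_nonneg_nonneg sum_nonneg mult_nonneg_nonneg prod_list_nonneg)
qed simp

lemma Lambda_nonneg: "Lambda m n T j \<ge> 0"
  unfolding Lambda_def by (rule Lam_upto_nonneg)

(* For i = 1 this holds because tuples (m - 1) 0 is empty when m \<ge> 2: the first sum vanishes
   and the second one is Rsum m n T 1. *)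
lemma Lambda_unfold:
  assumes "m \<ge> 2" and "i \<ge> 1"
  shows "Lambda m n T i =
    (\<Sum>xs \<in> tuples (m-1) (i-1). \<bar>T (i # xs)\<bar> *
        (\<Prod>j\<leftarrow>xs. (Lambda m n T j / \<bar>diag_entry m T j\<bar>) powr (1 / (real m - 1))))
    + (\<Sum>xs \<in> {xs \<in> tuples (m-1) n. xs \<notin> tuples (m-1) (i-1) \<and> xs \<noteq> replicate (m-1) i}.
        \<bar>T (i # xs)\<bar>)"
proof -
  obtain k where i: "i = Suc k"
    using assms(2) by (cases i) auto
  show ?thesis
  proof (cases "k = 0")
    case True
    then show ?thesis
      using i assms(1) by (simp add: Lambda_def Rsum_def tuples_0_empty)
  next
    case False
    have "Lam_upto m n T k j = Lambda m n T j" if "xs \<in> tuples (m-1) k" "j \<in> set xs" for xs j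
      using that by (intro Lam_upto_eq_Lambda) (auto simp: tuples_def)
    then show ?thesis
      using False i unfolding Lambda_def
      by (auto simp: Let_def intro!: sum.cong arg_cong[where f = prod_list] map_cong)
  qed
qed

lemma diag_entry_tensor_diag_mult:
  "diag_entry m (tensor_diag_mult T w) i = diag_entry m T i * w i ^ (m - 1)"
  unfolding diag_entry_def tensor_diag_mult_def by (simp add: tl_replicate prod_list_replicate)

lemma Z_tensor_diag_mult:
  assumes "Z_tensor m n T" and "\<And>j. j \<in> {1..n} \<Longrightarrow> 0 \<le> w j"
  shows "Z_tensor m n (tensor_diag_mult T w)"
  unfolding Z_tensor_def tensor_diag_mult_def
proof (intro ballI impI)
  fix idx
  assume idx: "idx \<in> tuples m n" and off_diag: "\<forall>k. idx \<noteq> replicate m k"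
  have "T idx \<le> 0"
    using assms(1) idx off_diag unfolding Z_tensor_def by blast
  moreover have "set (tl idx) \<subseteq> {1..n}"
    using idx list.set_sel(2)[of idx] unfolding tuples_def by (cases idx) auto
  then have "0 \<le> (\<Prod>j\<leftarrow>tl idx. w j)"
    using assms(2) by (intro prod_list_nonneg) auto
  ultimately show "T idx * (\<Prod>j\<leftarrow>tl idx. w j) \<le> 0"
    by (rule mult_nonpos_nonneg)
qed

lemma abs_tensor_diag_mult_row:
  assumes "xs \<in> tuples k n" and "\<And>j. j \<in> {1..n} \<Longrightarrow> 0 \<le> w j"
  shows "\<bar>tensor_diag_mult T w (i # xs)\<bar> = \<bar>T (i # xs)\<bar> * (\<Prod>j\<leftarrow>xs. w j)"
proof -
  have "0 \<le> (\<Prod>j\<leftarrow>xs. w j)"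
    using assms unfolding tuples_def by (intro prod_list_nonneg) auto
  then show ?thesis
    unfolding tensor_diag_mult_def by (simp add: abs_mult)
qed

lemma abs_tensor_diag_mult_row_le:
  assumes "xs \<in> tuples k n" and "\<And>j. j \<in> {1..n} \<Longrightarrow> 0 \<le> w j \<and> w j \<le> 1"
  shows "\<bar>tensor_diag_mult T w (i # xs)\<bar> \<le> \<bar>T (i # xs)\<bar>"
proof -
  have "(\<Prod>j\<leftarrow>xs. w j) \<le> 1"
    using assms unfolding tuples_def by (intro prod_list_le_one) auto
  moreover have "\<bar>tensor_diag_mult T w (i # xs)\<bar> = \<bar>T (i # xs)\<bar> * (\<Prod>j\<leftarrow>xs. w j)"
    by (rule abs_tensor_diag_mult_row) (use assms in auto)
  ultimately show ?thesis
    by (simp add: mult_left_le)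
qed

lemma Rsum_tensor_diag_mult_le_Lambda:
  assumes "m \<ge> 2" and i: "i \<in> {1..n}"
    and w_bounds: "\<And>j. j \<in> {1..n} \<Longrightarrow> 0 \<le> w j \<and> w j \<le> 1"
    and w_below: "\<And>j. j \<in> {1..<i} \<Longrightarrow>
          w j = (Lambda m n T j / \<bar>diag_entry m T j\<bar>) powr (1 / (real m - 1))"
  shows "Rsum m n (tensor_diag_mult T w) i \<le> Lambda m n T i"
proof -
  define S where "S = {xs \<in> tuples (m-1) n. xs \<noteq> replicate (m-1) i}"
  define A where "A = tuples (m-1) (i-1)"
  define C where "C = {xs \<in> tuples (m-1) n. xs \<notin> A \<and> xs \<noteq> replicate (m-1) i}"
  have "replicate (m-1) i \<notin> A"
    using assms(1) unfolding A_def tuples_def by auto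
  moreover have A_sub: "A \<subseteq> tuples (m-1) n"
    using i unfolding A_def tuples_def by (auto simp: subset_iff)
  ultimately have S_split: "S = A \<union> C" "A \<inter> C = {}"
    unfolding S_def C_def by auto
  have finite_A_C: "finite A" "finite C"
    unfolding A_def C_def by (simp_all add: finite_tuples)
  have on_A: "\<bar>tensor_diag_mult T w (i # xs)\<bar> = \<bar>T (i # xs)\<bar> *
      (\<Prod>j\<leftarrow>xs. (Lambda m n T j / \<bar>diag_entry m T j\<bar>) powr (1 / (real m - 1)))"
    if "xs \<in> A" for xs
  proof -
    have "set xs \<subseteq> {1..<i}"
      using that i unfolding A_def tuples_def by (auto simp: subset_iff)
    then have "(\<Prod>j\<leftarrow>xs. w j) =
        (\<Prod>j\<leftarrow>xs. (Lambda m n T j / \<bar>diag_entry m T j\<bar>) powr (1 / (real m - 1)))"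
      using w_below by (intro arg_cong[where f = prod_list] map_cong) auto
    moreover have "\<bar>tensor_diag_mult T w (i # xs)\<bar> = \<bar>T (i # xs)\<bar> * (\<Prod>j\<leftarrow>xs. w j)"
      by (rule abs_tensor_diag_mult_row) (use that A_sub w_bounds in auto)
    ultimately show ?thesis
      by simp
  qed
  have "Rsum m n (tensor_diag_mult T w) i
      = (\<Sum>xs\<in>A. \<bar>tensor_diag_mult T w (i # xs)\<bar>) + (\<Sum>xs\<in>C. \<bar>tensor_diag_mult T w (i # xs)\<bar>)"
    unfolding Rsum_def S_def[symmetric] S_split(1) using S_split(2) finite_A_C
    by (simp add: sum.union_disjoint)
  also have "\<dots> \<le> (\<Sum>xs\<in>A. \<bar>T (i # xs)\<bar> *
        (\<Prod>j\<leftarrow>xs. (Lambda m n T j / \<bar>diag_entry m T j\<bar>) powr (1 / (real m - 1))))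
      + (\<Sum>xs\<in>C. \<bar>T (i # xs)\<bar>)"
    using on_A w_bounds unfolding C_def
    by (intro add_mono sum_mono abs_tensor_diag_mult_row_le) auto
  also have "\<dots> = Lambda m n T i"
    using Lambda_unfold[OF assms(1), of i n T] i unfolding A_def C_def by simp
  finally show ?thesis .
qed

lemma nekrasov_Lambda_div_diag_le_one:
  assumes "nekrasov m n T" and "i \<in> {1..n}"
  shows "Lambda m n T i / \<bar>diag_entry m T i\<bar> \<le> 1"
proof -
  have "diag_entry m T i \<noteq> 0" and "Lambda m n T i < \<bar>diag_entry m T i\<bar>"
    using assms unfolding nekrasov_def by blast+
  then show ?thesis
    by simp
qed

lemma nekrasov_weight_bounds:
  assumes "nekrasov m n T" and "m \<ge> 2" and "i \<in> {1..n}"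
  shows "0 \<le> (Lambda m n T i / \<bar>diag_entry m T i\<bar>) powr (1 / (real m - 1))"
    and "(Lambda m n T i / \<bar>diag_entry m T i\<bar>) powr (1 / (real m - 1)) \<le> 1"
proof -
  have "(Lambda m n T i / \<bar>diag_entry m T i\<bar>) powr (1 / (real m - 1)) \<le> 1 powr (1 / (real m - 1))"
    using nekrasov_Lambda_div_diag_le_one[OF assms(1,3)] assms(2) Lambda_nonneg[of m n T i]
    by (intro powr_mono2) auto
  then show "(Lambda m n T i / \<bar>diag_entry m T i\<bar>) powr (1 / (real m - 1)) \<le> 1"
    by simp
qed simp

lemma Lambda_weight_power:
  assumes "m \<ge> 2"
  shows "((Lambda m n T i / \<bar>diag_entry m T i\<bar>) powr (1 / (real m - 1))) ^ (m - 1)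
    = Lambda m n T i / \<bar>diag_entry m T i\<bar>"
proof -
  have exponent: "1 / (real m - 1) = 1 / real (m - 1)"
    using assms by (simp add: of_nat_diff)
  show ?thesis
    unfolding exponent
    by (rule powr_inverse_power) (use assms Lambda_nonneg[of m n T i] in auto)
qed

lemma nekrasov_tensor_diag_mult_diag_dominant:
  assumes "m \<ge> 2" and "nekrasov m n T"
    and w: "\<And>i. i \<in> {1..n} \<Longrightarrow>
          w i = (Lambda m n T i / \<bar>diag_entry m T i\<bar>) powr (1 / (real m - 1))"
  shows "diag_dominant m n (tensor_diag_mult T w)"
  unfolding diag_dominant_iff_Rsum
proof
  fix i
  assume i: "i \<in> {1..n}"
  have "diag_entry m T i \<noteq> 0"
    using assms(2) i unfolding nekrasov_def by blast
  then have "\<bar>diag_entry m (tensor_diag_mult T w) i\<bar> = Lambda m n T i"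
    using w[OF i] Lambda_weight_power[OF assms(1)] Lambda_nonneg[of m n T i]
    by (simp add: diag_entry_tensor_diag_mult abs_mult)
  moreover have "Rsum m n (tensor_diag_mult T w) i \<le> Lambda m n T i"
    using assms(1) i w nekrasov_weight_bounds[OF assms(2,1)]
    by (intro Rsum_tensor_diag_mult_le_Lambda) auto
  ultimately show "Rsum m n (tensor_diag_mult T w) i \<le> \<bar>diag_entry m (tensor_diag_mult T w) i\<bar>"
    by simp
qed

theorem mainTheorem2:
  fixes m n :: nat and T :: tensor and w :: "nat \<Rightarrow> real"
  assumes "m \<ge> 2" and "even m" and "n \<ge> 1"
    and "nekrasov_Z m n T"
    and "\<forall>i \<in> {1..n}. diag_entry m T i > 0"
    and "\<forall>i \<in> {1..n}. w i = (Lambda m n T i / diag_entry m T i) powr (1 / (real m - 1))"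
  shows "Z_tensor m n (tensor_diag_mult T w) \<and> diag_dominant m n (tensor_diag_mult T w)"
proof -
  have nekrasov: "nekrasov m n T" and Z: "Z_tensor m n T"
    using assms(4) unfolding nekrasov_Z_def by auto
  have w: "w i = (Lambda m n T i / \<bar>diag_entry m T i\<bar>) powr (1 / (real m - 1))"
    if "i \<in> {1..n}" for i
    using assms(5,6) that by (simp add: abs_of_pos)
  have "Z_tensor m n (tensor_diag_mult T w)"
    using Z w nekrasov_weight_bounds[OF nekrasov assms(1)] by (intro Z_tensor_diag_mult) auto
  moreover have "diag_dominant m n (tensor_diag_mult T w)"
    using assms(1) nekrasov w by (rule nekrasov_tensor_diag_mult_diag_dominant)
  ultimately show ?thesis ..
qed

end
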